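(* Let $v,k$ be positive integers with $k\mid v$ and $v\mid k^2$, and let $\lambda=k^2/v$. Let $X=(x_t)_{t=0}^{v-1}$ be the binary sequence with $x_t=1$ for $0\le t\le k-1$ and $x_t=0$ for $k\le t\le v-1$. Let $Y=(y_t)_{t=0}^{v-1}$ be any binary sequence such that $y_{t+k}=y_t$ for all $t$ (indices modulo $v$) and $y_0y_1\dots y_{k-1}$ has weight $\lambda$. Then the subsets $A_X=\{t: x_t=1\}$ and $A_Y=\{t:y_t=1\}$ of $\mathbb{Z}_v$ form a $(v,2,k,\lambda)$-PSEDF in $\mathbb{Z}_v$ and a non-disjoint $(v,2,k,\lambda)$-SEDF in $\mathbb{Z}_v$.
   Context: A binary sequence $(x_t)_{t=0}^{v-1}$ corresponds to the subset $\{t\in\mathbb{Z}_v: x_t=1\}$ of $\mathbb{Z}_v$; its weight is the number of ones. For subsets $A,B$ of a group $G$, $\Delta(A,B)$ is the multiset $\{a-b:a\in A,b\in B\}$ and $\lambda G$ is the multiset with each element of $G$ exactly $\lambda$ times. For $G$ of order $v$ and $m>1$, a family of $k$-subsets $\{A_1,\dots,A_m\}$ of $G$ is a $(v,m,k,\lambda)$-PSEDF if $\Delta(A_i,A_j)=\lambda G$ for every $i\neq j$; it is a non-disjoint $(v,m,k,\lambda)$-SEDF if for each $i$ the multiset union $\bigcup_{j\neq i}\Delta(A_i,A_j)$ equals $\lambda G$. The sets need not be disjoint. *)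

theory Defs
  imports Main "HOL-Library.Multiset"
begin

text \<open>Elements of Z_v are represented by the naturals 0..v-1; subtraction is mod v.\<close>

definition zdiff :: "nat \<Rightarrow> nat set \<Rightarrow> nat set \<Rightarrow> nat multiset" where
  "zdiff v A B = image_mset (\<lambda>(a, b). (a + v - b) mod v) (mset_set (A \<times> B))"

definition lamG :: "nat \<Rightarrow> nat \<Rightarrow> nat multiset" where
  "lamG v lam = repeat_mset lam (mset_set {..<v})"

definition ksubset_family :: "nat \<Rightarrow> nat \<Rightarrow> nat \<Rightarrow> (nat \<Rightarrow> nat set) \<Rightarrow> bool" where
  "ksubset_family v m k A = (1 < m \<and> (\<forall>i<m. A i \<subseteq> {..<v} \<and> card (A i) = k))"

definition is_PSEDF :: "nat \<Rightarrow> nat \<Rightarrow> nat \<Rightarrow> nat \<Rightarrow> (nat \<Rightarrow> nat set) \<Rightarrow> bool" where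
  "is_PSEDF v m k lam A = (ksubset_family v m k A \<and>
     (\<forall>i<m. \<forall>j<m. i \<noteq> j \<longrightarrow> zdiff v (A i) (A j) = lamG v lam))"

definition is_SEDF :: "nat \<Rightarrow> nat \<Rightarrow> nat \<Rightarrow> nat \<Rightarrow> (nat \<Rightarrow> nat set) \<Rightarrow> bool" where
  "is_SEDF v m k lam A = (ksubset_family v m k A \<and>
     (\<forall>i<m. (\<Sum>j\<in>{..<m} - {i}. zdiff v (A i) (A j)) = lamG v lam))"

end

theory Submission
  imports Defs "HOL-Number_Theory.Cong"
begin

(* Read cyclically, y is k-periodic, so every window of k consecutive positions contains \<lambda> ones.
   Since A_X = {0, ..., k-1}, the multiplicity of g in \<Delta>(A_X, A_Y) is the number of ones of y in
   the window starting at -g, and in \<Delta>(A_Y, A_X) the number in the window starting at g; so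
   both are \<lambda> Z_v. Counting all differences gives k |A_Y| = \<lambda> v = k^2, hence |A_Y| = k. For two
   sets the PSEDF and SEDF conditions both reduce to \<Delta>(A_X, A_Y) = \<Delta>(A_Y, A_X) = \<lambda> Z_v. *)

lemma count_image_mset_mset_set:
  assumes "finite S"
  shows "count (image_mset f (mset_set S)) g = card {p \<in> S. f p = g}"
  using assms by (simp add: count_image_mset Int_def conj_commute)

lemma sub_mod_eq_iff_add_mod_eq:
  fixes a b g v :: nat
  assumes "a < v" "b < v" "g < v"
  shows "(a + v - b) mod v = g \<longleftrightarrow> (b + g) mod v = a"
proof -
  have "(a + v - b) mod v = g \<longleftrightarrow> [a + v - b = g] (mod v)"
    using assms by (simp add: cong_def)
  also have "\<dots> \<longleftrightarrow> [a + v - b + b = g + b] (mod v)"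
    by (simp add: cong_add_rcancel_nat)
  also have "a + v - b + b = a + v"
    using assms by simp
  also have "[a + v = g + b] (mod v) \<longleftrightarrow> (b + g) mod v = a"
    using assms by (auto simp: cong_def add.commute)
  finally show ?thesis .
qed

lemma count_zdiff:
  assumes "finite A" "finite B"
  shows "count (zdiff v A B) g = card {(a, b) \<in> A \<times> B. (a + v - b) mod v = g}"
  unfolding zdiff_def using assms
  by (auto simp: count_image_mset_mset_set intro!: arg_cong [where f = card])

lemma count_zdiff_fst:
  assumes "A \<subseteq> {..<v}" "B \<subseteq> {..<v}" "g < v"
  shows "count (zdiff v A B) g = card {a \<in> A. (a + v - g) mod v \<in> B}"
proof -
  have fin: "finite A" "finite B"
    using assms(1,2) finite_subset by auto
  have "(a + v - b) mod v = g \<longleftrightarrow> b = (a + v - g) mod v" if "a \<in> A" "b \<in> B" for a b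
  proof -
    have "a < v" "b < v"
      using that assms(1,2) by auto
    then show ?thesis
      using sub_mod_eq_iff_add_mod_eq [of a v b g] sub_mod_eq_iff_add_mod_eq [of a v g b] assms(3)
      by (metis add.commute)
  qed
  then have "{(a, b) \<in> A \<times> B. (a + v - b) mod v = g}
      = (\<lambda>a. (a, (a + v - g) mod v)) ` {a \<in> A. (a + v - g) mod v \<in> B}"
    unfolding set_eq_iff image_iff by fastforce
  then show ?thesis
    using fin by (simp add: count_zdiff card_image inj_on_def)
qed

lemma count_zdiff_snd:
  assumes "A \<subseteq> {..<v}" "B \<subseteq> {..<v}" "g < v"
  shows "count (zdiff v A B) g = card {b \<in> B. (b + g) mod v \<in> A}"
proof -
  have fin: "finite A" "finite B"
    using assms(1,2) finite_subset by auto
  have "(a + v - b) mod v = g \<longleftrightarrow> a = (b + g) mod v" if "a \<in> A" "b \<in> B" for a b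
  proof -
    have "a < v" "b < v"
      using that assms(1,2) by auto
    then show ?thesis
      using sub_mod_eq_iff_add_mod_eq [of a v b g] assms(3) by metis
  qed
  then have "{(a, b) \<in> A \<times> B. (a + v - b) mod v = g}
      = (\<lambda>b. ((b + g) mod v, b)) ` {b \<in> B. (b + g) mod v \<in> A}"
    unfolding set_eq_iff image_iff by fastforce
  then show ?thesis
    using fin by (simp add: count_zdiff card_image inj_on_def)
qed

lemma set_mset_zdiff_subset:
  assumes "0 < v"
  shows "set_mset (zdiff v A B) \<subseteq> {..<v}"
  using assms by (auto simp: zdiff_def)

lemma size_zdiff:
  assumes "finite A" "finite B"
  shows "size (zdiff v A B) = card A * card B"
  using assms by (simp add: zdiff_def card_cartesian_product)

lemma size_lamG: "size (lamG v lam) = lam * v"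
  by (simp add: lamG_def)

lemma eq_lamGI:
  assumes "set_mset M \<subseteq> {..<v}" and "\<And>g. g < v \<Longrightarrow> count M g = lam"
  shows "M = lamG v lam"
proof (rule multiset_eqI)
  show "count M g = count (lamG v lam) g" for g
    using assms by (cases "g < v") (auto simp: lamG_def not_in_iff)
qed

lemma is_PSEDF_is_SEDF_pairI:
  assumes "A \<subseteq> {..<v}" "B \<subseteq> {..<v}" "card A = k" "card B = k"
    and "zdiff v A B = lamG v lam" "zdiff v B A = lamG v lam"
  shows "is_PSEDF v 2 k lam (nth [A, B]) \<and> is_SEDF v 2 k lam (nth [A, B])"
proof -
  have two: "{..<2::nat} = {0, 1}"
    by auto
  have "ksubset_family v 2 k (nth [A, B])"
    using assms(1-4) by (simp add: ksubset_family_def less_2_cases_iff)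
  then show ?thesis
    using assms(5,6) by (simp add: is_PSEDF_def is_SEDF_def two less_2_cases_iff insert_Diff_if)
qed

lemma bij_betw_add_mod: "bij_betw (\<lambda>u. (u + d) mod n) {..<n} {..<(n::nat)}"
proof (cases "n = 0")
  case False
  have "inj_on (\<lambda>u. (u + d) mod n) {..<n}"
  proof (rule inj_onI)
    fix u w
    assume "u \<in> {..<n}" "w \<in> {..<n}" "(u + d) mod n = (w + d) mod n"
    then have "[u + d = w + d] (mod n)"
      by (simp add: cong_def)
    then have "[u = w] (mod n)"
      by (simp add: cong_add_rcancel_nat)
    then show "u = w"
      using \<open>u \<in> {..<n}\<close> \<open>w \<in> {..<n}\<close> by (simp add: cong_less_imp_eq_nat)
  qed
  moreover have "(\<lambda>u. (u + d) mod n) ` {..<n} \<subseteq> {..<n}"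
    using False by auto
  ultimately show ?thesis
    by (simp add: bij_betw_def endo_inj_surj)
qed (simp add: bij_betw_def)

lemma periodic_mod_eq:
  fixes f :: "nat \<Rightarrow> 'a"
  assumes "\<And>t. f (t + k) = f t"
  shows "f (t mod k) = f t"
proof -
  have "f (s + k * n) = f s" for s n
  proof (induction n)
    case (Suc n)
    have "s + k * Suc n = (s + k * n) + k"
      by simp
    then show ?case
      using Suc assms by metis
  qed simp
  from this [of "t mod k" "t div k"] show ?thesis
    by simp
qed

lemma card_periodic_window:
  fixes P :: "nat \<Rightarrow> bool"
  assumes "\<And>t. P (t + k) = P t"
  shows "card {u. u < k \<and> P (u + d)} = card {u. u < k \<and> P u}"
proof -
  have "bij_betw (\<lambda>u. (u + d) mod k) {u \<in> {..<k}. P (u + d)} {w \<in> {..<k}. P w}"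
    by (rule bij_betw_Collect [OF bij_betw_add_mod]) (simp add: periodic_mod_eq assms)
  then show ?thesis
    by (simp add: bij_betw_same_card)
qed

lemma card_periodic_window_mod:
  fixes y :: "nat \<Rightarrow> 'a"
  assumes "0 < v" "k \<le> v" "\<forall>t<v. y ((t + k) mod v) = y t"
  shows "card {u. u < k \<and> P (y ((u + d) mod v))} = card {t. t < k \<and> P (y t)}"
proof -
  have "P (y ((t + k) mod v)) = P (y (t mod v))" for t
  proof -
    have "(t + k) mod v = (t mod v + k) mod v"
      by (simp add: mod_add_left_eq)
    then show ?thesis
      using assms(1,3) by simp
  qed
  then have "card {u. u < k \<and> P (y ((u + d) mod v))} = card {u. u < k \<and> P (y (u mod v))}"
    using card_periodic_window [of "\<lambda>t. P (y (t mod v))" k d] by simp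
  also have "{u. u < k \<and> P (y (u mod v))} = {t. t < k \<and> P (y t)}"
    using assms(2) by auto
  finally show ?thesis .
qed

lemma zdiff_interval_eq_lamG:
  assumes "0 < v" "k \<le> v" "B \<subseteq> {..<v}"
    and window: "\<And>d. card {u. u < k \<and> (u + d) mod v \<in> B} = lam"
  shows "zdiff v {..<k} B = lamG v lam" "zdiff v B {..<k} = lamG v lam"
proof -
  have interval_sub: "{..<k} \<subseteq> {..<v}"
    using assms(2) by auto
  show "zdiff v {..<k} B = lamG v lam"
  proof (rule eq_lamGI)
    show "set_mset (zdiff v {..<k} B) \<subseteq> {..<v}"
      using assms(1) by (rule set_mset_zdiff_subset)
    fix g
    assume "g < v"
    then have "{a \<in> {..<k}. (a + v - g) mod v \<in> B} = {u. u < k \<and> (u + (v - g)) mod v \<in> B}"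
      by auto
    then show "count (zdiff v {..<k} B) g = lam"
      using count_zdiff_fst [OF interval_sub assms(3) \<open>g < v\<close>] window by simp
  qed
  show "zdiff v B {..<k} = lamG v lam"
  proof (rule eq_lamGI)
    show "set_mset (zdiff v B {..<k}) \<subseteq> {..<v}"
      using assms(1) by (rule set_mset_zdiff_subset)
    fix g
    assume "g < v"
    have "{a \<in> {..<k}. (a + g) mod v \<in> B} = {u. u < k \<and> (u + g) mod v \<in> B}"
      by auto
    then show "count (zdiff v B {..<k}) g = lam"
      using count_zdiff_snd [OF assms(3) interval_sub \<open>g < v\<close>] window by simp
  qed
qed

lemma card_eq_if_zdiff_eq_lamG:
  assumes "finite A" "finite B" "zdiff v A B = lamG v lam"
    and "card A = k" "0 < k" "lam * v = k * k"
  shows "card B = k"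
proof -
  have "k * card B = size (zdiff v A B)"
    using assms(1,2,4) by (simp add: size_zdiff)
  also have "\<dots> = k * k"
    using assms(3,6) by (simp add: size_lamG)
  finally show ?thesis
    using assms(5) by simp
qed

theorem theorem3p4:
  fixes v k lam :: nat and x y :: "nat \<Rightarrow> nat"
  assumes "0 < v" and "0 < k" and "k dvd v" and "v dvd k ^ 2"
    and "lam = k ^ 2 div v"
    and "\<forall>t<v. x t = (if t < k then 1 else 0)"
    and "\<forall>t<v. y t \<in> {0, 1}"
    and "\<forall>t<v. y ((t + k) mod v) = y t"
    and "card {t. t < k \<and> y t = 1} = lam"
  shows "is_PSEDF v 2 k lam (nth [{t. t < v \<and> x t = 1}, {t. t < v \<and> y t = 1}])
       \<and> is_SEDF v 2 k lam (nth [{t. t < v \<and> x t = 1}, {t. t < v \<and> y t = 1}])"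
proof -
  define B where "B = {t. t < v \<and> y t = 1}"
  have "k \<le> v"
    using assms(1,3) by (simp add: dvd_imp_le)
  then have A_eq: "{t. t < v \<and> x t = 1} = {..<k}"
    using assms(6) by (auto split: if_splits)
  have B_sub: "B \<subseteq> {..<v}"
    by (auto simp: B_def)
  have "{u. u < k \<and> (u + d) mod v \<in> B} = {u. u < k \<and> y ((u + d) mod v) = 1}" for d
    using assms(1) by (auto simp: B_def)
  then have "card {u. u < k \<and> (u + d) mod v \<in> B} = lam" for d
    using card_periodic_window_mod [OF assms(1) \<open>k \<le> v\<close> assms(8), of "\<lambda>z. z = 1"] assms(9)
    by simp
  then have AB: "zdiff v {..<k} B = lamG v lam" and BA: "zdiff v B {..<k} = lamG v lam"
    using zdiff_interval_eq_lamG [OF assms(1) \<open>k \<le> v\<close> B_sub] by blast+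
  have "lam * v = k * k"
    using assms(4,5) by (simp add: power2_eq_square)
  then have "card B = k"
    using card_eq_if_zdiff_eq_lamG [OF _ _ AB] finite_subset [OF B_sub] assms(2) by simp
  then show ?thesis
    unfolding A_eq B_def [symmetric]
    using is_PSEDF_is_SEDF_pairI [OF _ B_sub _ _ AB BA] \<open>k \<le> v\<close> by simp
qed

end
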